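(* Let $(V,\rho)$ be a finite rank torsion free $\mathfrak{sl}(2)$-module. Then its Casimir operator $C_\rho$, regarded as a $\mathbb{C}$-linear endomorphism of $V$, has a minimal polynomial, and it coincides with the minimal polynomial of the Casimir operator $C_{\rho_{\mathrm{rat}}}$ of its rationalization $F_{\mathrm{rat}}(V,\rho)=(S^{-1}V,\rho_{\mathrm{rat}})$.
   Context: $\mathfrak{sl}(2)$ has basis $L_{-1}=f$, $L_0=-\tfrac12 h$, $L_1=-e$ for a Chevalley basis $e,f,h$ ($[e,f]=h$, $[h,e]=2e$, $[h,f]=-2f$). An $\mathfrak{sl}(2)$-module $(V,\rho)$ is a $\mathbb{C}[z]$-module via $z\cdot v=\rho(L_0)v$; it is torsion free if torsion free as a $\mathbb{C}[z]$-module and of finite rank if $S^{-1}V$ is finite-dimensional over $\mathbb{C}(z)$, $S=\mathbb{C}[z]\setminus\{0\}$. The Casimir operator is $C_\rho=\rho(L_0)(\rho(L_0)-1)-\rho(L_{-1})\rho(L_1)$. The rationalization is $(S^{-1}V,\rho_{\mathrm{rat}})$ with $\rho_{\mathrm{rat}}(L_{-1})(v/p(z))=\rho(L_{-1})(v)/p(z-1)$, $\rho_{\mathrm{rat}}(L_0)(v/p(z))=zv/p(z)$, $\rho_{\mathrm{rat}}(L_1)(v/p(z))=\rho(L_1)(v)/p(z+1)$. *)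

theory Defs
  imports Complex_Main "HOL-Computational_Algebra.Polynomial"
begin

definition sl2_module ::
  "(complex \<Rightarrow> 'v::ab_group_add \<Rightarrow> 'v) \<Rightarrow> ('v \<Rightarrow> 'v) \<Rightarrow> ('v \<Rightarrow> 'v) \<Rightarrow> ('v \<Rightarrow> 'v) \<Rightarrow> bool" where
  "sl2_module scale e f h \<longleftrightarrow>
     vector_space scale \<and>
     Vector_Spaces.linear scale scale e \<and> Vector_Spaces.linear scale scale f \<and>
     Vector_Spaces.linear scale scale h \<and>
     (\<forall>v. e (f v) - f (e v) = h v) \<and>
     (\<forall>v. h (e v) - e (h v) = scale 2 (e v)) \<and>
     (\<forall>v. h (f v) - f (h v) = - scale 2 (f v))"

definition Lm1 :: "('v \<Rightarrow> 'v) \<Rightarrow> 'v \<Rightarrow> 'v" where "Lm1 f = f"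
definition L0 :: "(complex \<Rightarrow> 'v::ab_group_add \<Rightarrow> 'v) \<Rightarrow> ('v \<Rightarrow> 'v) \<Rightarrow> 'v \<Rightarrow> 'v" where
  "L0 scale h = (\<lambda>v. scale (-1/2) (h v))"
definition L1 :: "('v::ab_group_add \<Rightarrow> 'v) \<Rightarrow> 'v \<Rightarrow> 'v" where "L1 e = (\<lambda>v. - e v)"

definition poly_op :: "(complex \<Rightarrow> 'v::ab_group_add \<Rightarrow> 'v) \<Rightarrow> complex poly \<Rightarrow> ('v \<Rightarrow> 'v) \<Rightarrow> 'v \<Rightarrow> 'v" where
  "poly_op scale P T v = (\<Sum>i\<le>degree P. scale (coeff P i) ((T ^^ i) v))"

text \<open>C[z]-module structure: z acts as L_0; p . v = p(L_0) v.\<close>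
definition zact :: "(complex \<Rightarrow> 'v::ab_group_add \<Rightarrow> 'v) \<Rightarrow> ('v \<Rightarrow> 'v) \<Rightarrow> complex poly \<Rightarrow> 'v \<Rightarrow> 'v" where
  "zact scale h p v = poly_op scale p (L0 scale h) v"

definition torsion_free :: "(complex \<Rightarrow> 'v::ab_group_add \<Rightarrow> 'v) \<Rightarrow> ('v \<Rightarrow> 'v) \<Rightarrow> bool" where
  "torsion_free scale h \<longleftrightarrow> (\<forall>p v. p \<noteq> 0 \<longrightarrow> zact scale h p v = 0 \<longrightarrow> v = 0)"

text \<open>The localization S^{-1}V, S = C[z] - {0}, realised as pairs (v, p) with p \<noteq> 0
(standing for v/p) modulo the usual equivalence relation.\<close>
definition frac_ok :: "'v \<times> complex poly \<Rightarrow> bool" where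
  "frac_ok x \<longleftrightarrow> snd x \<noteq> 0"

definition frac_eq :: "(complex \<Rightarrow> 'v::ab_group_add \<Rightarrow> 'v) \<Rightarrow> ('v \<Rightarrow> 'v) \<Rightarrow>
    'v \<times> complex poly \<Rightarrow> 'v \<times> complex poly \<Rightarrow> bool" where
  "frac_eq scale h x y \<longleftrightarrow>
     (\<exists>s. s \<noteq> 0 \<and> zact scale h s (zact scale h (snd y) (fst x) - zact scale h (snd x) (fst y)) = 0)"

definition frac_add :: "(complex \<Rightarrow> 'v::ab_group_add \<Rightarrow> 'v) \<Rightarrow> ('v \<Rightarrow> 'v) \<Rightarrow>
    'v \<times> complex poly \<Rightarrow> 'v \<times> complex poly \<Rightarrow> 'v \<times> complex poly" where
  "frac_add scale h x y =
     (zact scale h (snd y) (fst x) + zact scale h (snd x) (fst y), snd x * snd y)"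

definition frac_zero :: "'v::ab_group_add \<times> complex poly" where
  "frac_zero = (0, 1)"

definition frac_sum :: "(complex \<Rightarrow> 'v::ab_group_add \<Rightarrow> 'v) \<Rightarrow> ('v \<Rightarrow> 'v) \<Rightarrow>
    ('v \<times> complex poly) list \<Rightarrow> 'v \<times> complex poly" where
  "frac_sum scale h xs = foldr (frac_add scale h) xs frac_zero"

text \<open>Scalar multiplication by a complex number and by a rational function a/b \<in> C(z).\<close>
definition frac_cscale :: "(complex \<Rightarrow> 'v::ab_group_add \<Rightarrow> 'v) \<Rightarrow> complex \<Rightarrow>
    'v \<times> complex poly \<Rightarrow> 'v \<times> complex poly" where
  "frac_cscale scale c x = (scale c (fst x), snd x)"

definition frac_rscale :: "(complex \<Rightarrow> 'v::ab_group_add \<Rightarrow> 'v) \<Rightarrow> ('v \<Rightarrow> 'v) \<Rightarrow>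
    complex poly \<times> complex poly \<Rightarrow> 'v \<times> complex poly \<Rightarrow> 'v \<times> complex poly" where
  "frac_rscale scale h ab x = (zact scale h (fst ab) (fst x), snd ab * snd x)"

text \<open>Finite rank: S^{-1}V is spanned over C(z) by finitely many elements.\<close>
definition finite_rank :: "(complex \<Rightarrow> 'v::ab_group_add \<Rightarrow> 'v) \<Rightarrow> ('v \<Rightarrow> 'v) \<Rightarrow> bool" where
  "finite_rank scale h \<longleftrightarrow>
     (\<exists>bs :: ('v \<times> complex poly) list. list_all frac_ok bs \<and>
        (\<forall>x. frac_ok x \<longrightarrow>
           (\<exists>cs :: (complex poly \<times> complex poly) list.
               length cs = length bs \<and> list_all (\<lambda>c. snd c \<noteq> 0) cs \<and>
               frac_eq scale h x (frac_sum scale h (map2 (frac_rscale scale h) cs bs)))))"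

definition casimir :: "(complex \<Rightarrow> 'v::ab_group_add \<Rightarrow> 'v) \<Rightarrow> ('v \<Rightarrow> 'v) \<Rightarrow> ('v \<Rightarrow> 'v) \<Rightarrow> ('v \<Rightarrow> 'v) \<Rightarrow> 'v \<Rightarrow> 'v" where
  "casimir scale e f h v =
     L0 scale h (L0 scale h v) - L0 scale h v - Lm1 f (L1 e v)"

definition rat_Lm1 :: "('v \<Rightarrow> 'v) \<Rightarrow> 'v \<times> complex poly \<Rightarrow> 'v \<times> complex poly" where
  "rat_Lm1 f x = (Lm1 f (fst x), pcompose (snd x) [:-1, 1:])"
definition rat_L0 :: "(complex \<Rightarrow> 'v::ab_group_add \<Rightarrow> 'v) \<Rightarrow> ('v \<Rightarrow> 'v) \<Rightarrow> 'v \<times> complex poly \<Rightarrow> 'v \<times> complex poly" where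
  "rat_L0 scale h x = (L0 scale h (fst x), snd x)"
definition rat_L1 :: "('v::ab_group_add \<Rightarrow> 'v) \<Rightarrow> 'v \<times> complex poly \<Rightarrow> 'v \<times> complex poly" where
  "rat_L1 e x = (L1 e (fst x), pcompose (snd x) [:1, 1:])"

definition casimir_rat :: "(complex \<Rightarrow> 'v::ab_group_add \<Rightarrow> 'v) \<Rightarrow> ('v \<Rightarrow> 'v) \<Rightarrow> ('v \<Rightarrow> 'v) \<Rightarrow> ('v \<Rightarrow> 'v) \<Rightarrow>
    'v \<times> complex poly \<Rightarrow> 'v \<times> complex poly" where
  "casimir_rat scale e f h x =
     frac_add scale h
       (frac_add scale h (rat_L0 scale h (rat_L0 scale h x)) (frac_cscale scale (-1) (rat_L0 scale h x)))
       (frac_cscale scale (-1) (rat_Lm1 f (rat_L1 e x)))"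

definition frac_poly_op :: "(complex \<Rightarrow> 'v::ab_group_add \<Rightarrow> 'v) \<Rightarrow> ('v \<Rightarrow> 'v) \<Rightarrow> complex poly \<Rightarrow>
    ('v \<times> complex poly \<Rightarrow> 'v \<times> complex poly) \<Rightarrow> 'v \<times> complex poly \<Rightarrow> 'v \<times> complex poly" where
  "frac_poly_op scale h P T x =
     frac_sum scale h (map (\<lambda>i. frac_cscale scale (coeff P i) ((T ^^ i) x)) [0..<Suc (degree P)])"

definition is_minpoly :: "(complex poly \<Rightarrow> bool) \<Rightarrow> complex poly \<Rightarrow> bool" where
  "is_minpoly kills P \<longleftrightarrow> P \<noteq> 0 \<and> lead_coeff P = 1 \<and> kills P \<and>
     (\<forall>Q. Q \<noteq> 0 \<longrightarrow> kills Q \<longrightarrow> degree P \<le> degree Q)"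

definition kills_casimir :: "(complex \<Rightarrow> 'v::ab_group_add \<Rightarrow> 'v) \<Rightarrow> ('v \<Rightarrow> 'v) \<Rightarrow> ('v \<Rightarrow> 'v) \<Rightarrow> ('v \<Rightarrow> 'v) \<Rightarrow>
    complex poly \<Rightarrow> bool" where
  "kills_casimir scale e f h P \<longleftrightarrow> (\<forall>v. poly_op scale P (casimir scale e f h) v = 0)"

definition kills_casimir_rat :: "(complex \<Rightarrow> 'v::ab_group_add \<Rightarrow> 'v) \<Rightarrow> ('v \<Rightarrow> 'v) \<Rightarrow> ('v \<Rightarrow> 'v) \<Rightarrow> ('v \<Rightarrow> 'v) \<Rightarrow>
    complex poly \<Rightarrow> bool" where
  "kills_casimir_rat scale e f h P \<longleftrightarrow>
     (\<forall>x. frac_ok x \<longrightarrow> frac_eq scale h (frac_poly_op scale h P (casimir_rat scale e f h) x) frac_zero)"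

end

theory Submission
  imports Defs "Jordan_Normal_Form.Char_Poly"
begin

text \<open>
  Let \<open>z\<close> act as \<open>L0\<close> and \<open>x\<close> as the Casimir operator \<open>C\<close>; since \<open>C\<close> commutes with \<open>L0\<close>,
  this makes \<open>V\<close> a module over \<open>\<complex>[z][x]\<close>. Its annihilator \<open>J\<close> is an ideal which is saturated
  with respect to nonzero elements of \<open>\<complex>[z]\<close> (torsion freeness) and nonzero (finite rank,
  by the determinant trick over \<open>\<complex>[z]\<close>). As \<open>e L0 = (L0 + 1) e\<close>, \<open>f L0 = (L0 - 1) f\<close>,
  \<open>e f = C - L0\<^sup>2 - L0\<close> and \<open>f e = C - L0\<^sup>2 + L0\<close>, the ideal \<open>J\<close> is closed under
  \<open>a(z, x) \<mapsto> a(z + 1, x) (x - z\<^sup>2 - z)\<close> and \<open>a(z, x) \<mapsto> a(z - 1, x) (x - z\<^sup>2 + z)\<close>.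
  Comparing an element of \<open>J\<close> of least \<open>x\<close>-degree with these two multiples shows that it is
  proportional to its own shift in \<open>z\<close>, so its coefficients are constant multiples of a single
  polynomial in \<open>z\<close>. Hence \<open>J\<close> contains a nonzero polynomial in \<open>x\<close> alone, and \<open>C\<close> has a
  minimal polynomial. The rationalised Casimir operator sends \<open>v / p\<close> to \<open>p\<^sup>2 C v / p\<^sup>3\<close>,
  so by torsion freeness it is killed by exactly the same polynomials as \<open>C\<close>.
\<close>

definition shift_poly :: "'a::comm_ring_1 \<Rightarrow> 'a poly \<Rightarrow> 'a poly" where
  "shift_poly c p = pcompose p [:c, 1:]"

lemma poly_shift_poly [simp]: "poly (shift_poly c p) x = poly p (x + c)"
  by (simp add: shift_poly_def poly_pcompose add.commute)

lemma shift_poly_shift_poly [simp]: "shift_poly c (shift_poly d p) = shift_poly (c + d) p"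
  by (simp add: shift_poly_def pcompose_assoc[symmetric] add.commute)

lemma shift_poly_0 [simp]: "shift_poly 0 p = p"
  by (simp add: shift_poly_def)

interpretation shift_poly: inj_idom_hom "shift_poly c" for c :: "'a::idom"
proof unfold_locales
  show "shift_poly c 0 = 0" "shift_poly c 1 = 1"
    by (simp_all add: shift_poly_def)
  show "shift_poly c (p * q) = shift_poly c p * shift_poly c q" for p q
    by (simp add: shift_poly_def pcompose_mult)
  show "shift_poly c (p + q) = shift_poly c p + shift_poly c q" for p q
    by (simp add: shift_poly_def pcompose_add)
  show "p = 0" if "shift_poly c p = 0" for p
    using shift_poly_shift_poly[of "-c" c p] that by (simp add: shift_poly_def)
qed

interpretation shift_coeffs: map_poly_inj_idom_hom "shift_poly c" for c :: "'a::idom" ..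

section \<open>Shift-stable ideals of \<open>K[z][x]\<close>\<close>

lemma shift_invariant_ratio_imp_const:
  fixes p q :: "'a::field_char_0 poly"
  assumes "q \<noteq> 0" "c \<noteq> 0" and shift_eq: "p * shift_poly c q = q * shift_poly c p"
  shows "\<exists>k. p = Polynomial.smult k q"
proof -
  define x :: "nat \<Rightarrow> 'a" where "x j = - of_nat j * c" for j
  have "inj x" using \<open>c \<noteq> 0\<close> by (auto simp: x_def inj_def)
  then have "finite (x -` {y. poly q y = 0})"
    by (rule finite_vimageI[rotated]) (rule poly_roots_finite[OF \<open>q \<noteq> 0\<close>])
  then obtain N where N: "\<And>j. poly q (x j) = 0 \<Longrightarrow> j < N"
    by (auto simp: finite_nat_set_iff_bounded)
  define k where "k = poly p (x N) / poly q (x N)"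
  define g where "g = p - Polynomial.smult k q"
  have q_nonzero: "poly q (x (N + j)) \<noteq> 0" for j
    using N[of "N + j"] by auto
  have "poly g y * poly q (y + c) = poly q y * poly g (y + c)" for y
    using arg_cong[OF shift_eq, of "\<lambda>r. poly r y"] by (simp add: g_def algebra_simps)
  moreover have "x (Suc j) + c = x j" for j
    by (simp add: x_def algebra_simps)
  ultimately have step: "poly g (x (Suc j)) * poly q (x j) = poly q (x (Suc j)) * poly g (x j)" for j
    by metis
  have roots: "poly g (x (N + j)) = 0" for j
  proof (induction j)
    case 0
    show ?case using q_nonzero[of 0] by (simp add: g_def k_def)
  next
    case (Suc j)
    then show ?case using step[of "N + j"] q_nonzero[of j] by simp
  qed
  have "g = 0"
  proof (rule ccontr)
    assume "g \<noteq> 0"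
    have "range (\<lambda>j. x (N + j)) \<subseteq> {y. poly g y = 0}" using roots by auto
    then have "finite (range (\<lambda>j. x (N + j)))"
      using poly_roots_finite[OF \<open>g \<noteq> 0\<close>] by (rule finite_subset)
    moreover have "inj (\<lambda>j. x (N + j))"
      using \<open>inj x\<close> by (auto intro!: injI dest: injD)
    ultimately show False
      using finite_imageD by fastforce
  qed
  then show ?thesis by (auto simp: g_def)
qed

lemma degree_1_root_imp_smult_linear:
  fixes w :: "'a::idom poly"
  assumes "degree w = 1" "poly w q = 0"
  shows "\<exists>k. w = Polynomial.smult k [:-q, 1:]"
proof -
  have "[:-q, 1:] dvd w"
    using assms(2) by (simp add: poly_eq_0_iff_dvd)
  then obtain d where w: "w = [:-q, 1:] * d" ..
  then have "degree d = 0"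
    using assms(1) by (cases "d = 0") (simp_all add: degree_mult_eq del: mult_pCons_left)
  then show ?thesis
    using w by (auto elim!: degree_eq_zeroE)
qed

lemma cross_multiples_imp_proportional:
  fixes a b :: "'a::idom poly"
  assumes "a \<noteq> 0" "b \<noteq> 0" "degree b = degree a" "c\<^sub>1 \<noteq> 0" "c\<^sub>2 \<noteq> 0"
    and b_mult: "Polynomial.smult c\<^sub>1 (b * [:-q, 1:]) = a * r"
    and a_mult: "Polynomial.smult c\<^sub>2 (a * [:-q, 1:]) = b * s"
  shows "\<exists>u k. u \<noteq> 0 \<and> Polynomial.smult u b = Polynomial.smult k a"
proof -
  define P where "P = [:-q, 1:]"
  have "P \<noteq> 0" "degree P = 1" by (simp_all add: P_def)
  have bP: "Polynomial.smult c\<^sub>1 (b * P) = a * r" and aP: "Polynomial.smult c\<^sub>2 (a * P) = b * s"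
    using b_mult a_mult by (simp_all only: P_def)
  have "(r * s) * (a * b) = (a * r) * (b * s)"
    by (simp add: ac_simps)
  also have "\<dots> = Polynomial.smult c\<^sub>1 (b * P) * Polynomial.smult c\<^sub>2 (a * P)"
    by (simp only: bP aP)
  also have "\<dots> = Polynomial.smult (c\<^sub>1 * c\<^sub>2) (P * P) * (a * b)"
    by (simp add: ac_simps)
  finally have rs: "r * s = Polynomial.smult (c\<^sub>1 * c\<^sub>2) (P * P)"
    using assms(1,2) by (metis mult_right_cancel mult_eq_0_iff)
  have "r \<noteq> 0" "s \<noteq> 0"
    using rs assms(4,5) \<open>P \<noteq> 0\<close> by auto
  then have "degree r = 1" "degree s = 1"
    using arg_cong[OF bP, of degree] arg_cong[OF aP, of degree] assms(1-5) \<open>P \<noteq> 0\<close> \<open>degree P = 1\<close>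
    by (simp_all add: degree_mult_eq)
  have "poly r q * poly s q = 0"
    using arg_cong[OF rs, of "\<lambda>p. poly p q"] by (simp add: P_def)
  then consider "poly r q = 0" | "poly s q = 0" by auto
  then show ?thesis
  proof cases
    case 1
    then obtain k where "r = Polynomial.smult k P"
      using degree_1_root_imp_smult_linear \<open>degree r = 1\<close> by (auto simp: P_def)
    then have "Polynomial.smult c\<^sub>1 b * P = Polynomial.smult k a * P"
      using bP by (simp add: ac_simps)
    then show ?thesis using assms(4) \<open>P \<noteq> 0\<close> by (metis mult_right_cancel)
  next
    case 2
    then obtain k where "s = Polynomial.smult k P"
      using degree_1_root_imp_smult_linear \<open>degree s = 1\<close> by (auto simp: P_def)
    then have "Polynomial.smult k b * P = Polynomial.smult c\<^sub>2 a * P"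
      using aP by (simp add: ac_simps)
    then have "Polynomial.smult k b = Polynomial.smult c\<^sub>2 a" using \<open>P \<noteq> 0\<close> by (metis mult_right_cancel)
    moreover from this have "k \<noteq> 0" using assms(1,5) by auto
    ultimately show ?thesis by blast
  qed
qed

lemma shift_proportional_imp_const_coeffs:
  fixes a :: "'a::field_char_0 poly poly"
  assumes "a \<noteq> 0" "c \<noteq> 0" "u \<noteq> 0"
    and proportional: "Polynomial.smult u (map_poly (shift_poly c) a) = Polynomial.smult k a"
  shows "\<exists>l m. l \<noteq> 0 \<and> a = Polynomial.smult l (map_poly (\<lambda>x. [:x:]) m)"
proof -
  define l where "l = lead_coeff a"
  have "l \<noteq> 0" using \<open>a \<noteq> 0\<close> by (simp add: l_def)
  have coeff_eq: "u * shift_poly c (coeff a i) = k * coeff a i" for i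
    using arg_cong[OF proportional, of "\<lambda>p. coeff p i"] by simp
  have "u * (coeff a i * shift_poly c l) = u * (l * shift_poly c (coeff a i))" for i
  proof -
    have "u * (coeff a i * shift_poly c l) = coeff a i * (k * l)"
      using coeff_eq[of "degree a"] by (simp add: l_def mult.left_commute)
    also have "\<dots> = l * (u * shift_poly c (coeff a i))"
      by (simp add: coeff_eq ac_simps)
    finally show ?thesis by (simp add: ac_simps)
  qed
  then have "\<exists>k. coeff a i = Polynomial.smult k l" for i
    using shift_invariant_ratio_imp_const[OF \<open>l \<noteq> 0\<close> \<open>c \<noteq> 0\<close>] \<open>u \<noteq> 0\<close> by simp
  then obtain m where m: "\<And>i. coeff a i = Polynomial.smult (m i) l"
    by metis
  define m' where "m' = map_poly (\<lambda>p. coeff p (degree l) / lead_coeff l) a"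
  have "coeff m' i = m i" for i
    using \<open>l \<noteq> 0\<close> by (simp add: m'_def coeff_map_poly m)
  then have "a = Polynomial.smult l (map_poly (\<lambda>x. [:x:]) m')"
    by (intro poly_eqI) (simp add: coeff_map_poly m)
  then show ?thesis using \<open>l \<noteq> 0\<close> by blast
qed

locale shift_stable_ideal =
  fixes J :: "'a::field_char_0 poly poly set" and c :: 'a and q :: "'a poly"
  assumes shift_nonzero: "c \<noteq> 0"
    and diff_mem: "a \<in> J \<Longrightarrow> b \<in> J \<Longrightarrow> a - b \<in> J"
    and mult_mem: "a \<in> J \<Longrightarrow> b * a \<in> J"
    and saturated: "Polynomial.smult s a \<in> J \<Longrightarrow> s \<noteq> 0 \<Longrightarrow> a \<in> J"
    and shift_mult_mem: "a \<in> J \<Longrightarrow> map_poly (shift_poly c) a * [:-q, 1:] \<in> J"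
    and unshift_mult_mem: "a \<in> J \<Longrightarrow> map_poly (shift_poly (-c)) (a * [:-q, 1:]) \<in> J"
begin

lemma min_degree_divides:
  assumes "a \<in> J" "a \<noteq> 0" and min: "\<And>b. b \<in> J \<Longrightarrow> b \<noteq> 0 \<Longrightarrow> degree a \<le> degree b"
    and "b \<in> J"
  shows "\<exists>u r. u \<noteq> 0 \<and> Polynomial.smult u b = a * r"
proof -
  obtain r s where divmod: "pseudo_divmod b a = (r, s)"
    by (cases "pseudo_divmod b a")
  define u where "u = lead_coeff a ^ (Suc (degree b) - degree a)"
  have "u \<noteq> 0" using \<open>a \<noteq> 0\<close> by (simp add: u_def)
  have eq: "Polynomial.smult u b = a * r + s" and "s = 0 \<or> degree s < degree a"
    using pseudo_divmod[OF \<open>a \<noteq> 0\<close> divmod] by (simp_all add: u_def)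
  have "Polynomial.smult u b - a * r \<in> J"
    using mult_mem[OF \<open>b \<in> J\<close>, of "[:u:]"] mult_mem[OF \<open>a \<in> J\<close>, of r]
    by (intro diff_mem) (simp_all add: mult.commute)
  then have "s \<in> J" by (simp add: eq)
  then have "s = 0"
    using min \<open>s = 0 \<or> degree s < degree a\<close> by fastforce
  then show ?thesis using eq \<open>u \<noteq> 0\<close> by auto
qed

text \<open>
  An element \<open>a\<close> of least degree divides, up to scalars in \<open>K[z]\<close>, both shifted multiples
  of itself; comparing the two quotients shows that \<open>a\<close> is proportional to its shift.
\<close>
lemma const_coeff_poly_mem:
  assumes "a\<^sub>0 \<in> J" "a\<^sub>0 \<noteq> 0"
  shows "\<exists>m. m \<noteq> 0 \<and> map_poly (\<lambda>x. [:x:]) m \<in> J"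
proof -
  obtain a where a: "a \<in> J \<and> a \<noteq> 0" and min: "\<And>b. b \<in> J \<and> b \<noteq> 0 \<Longrightarrow> degree a \<le> degree b"
    using ex_has_least_nat[of "\<lambda>a. a \<in> J \<and> a \<noteq> 0" a\<^sub>0 degree] assms by blast
  let ?\<sigma> = "map_poly (shift_poly c)" and ?P = "[:-q, 1:]"
  have divides: "\<exists>u r. u \<noteq> 0 \<and> Polynomial.smult u b = a * r" if "b \<in> J" for b
    using min_degree_divides[of a b] a min that by blast
  obtain u\<^sub>1 r where "u\<^sub>1 \<noteq> 0" and r: "Polynomial.smult u\<^sub>1 (?\<sigma> a * ?P) = a * r"
    using divides[OF shift_mult_mem] a by blast
  obtain u\<^sub>2 s where "u\<^sub>2 \<noteq> 0" and s: "Polynomial.smult u\<^sub>2 (map_poly (shift_poly (-c)) (a * ?P)) = a * s"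
    using divides[OF unshift_mult_mem] a by blast
  have "Polynomial.smult (shift_poly c u\<^sub>2) (a * ?P) = ?\<sigma> a * ?\<sigma> s"
    using arg_cong[OF s, of ?\<sigma>]
    by (simp add: shift_poly.map_poly_hom_smult shift_coeffs.hom_mult map_poly_map_poly o_def map_poly_idI)
  then obtain v k where "v \<noteq> 0" "Polynomial.smult v (?\<sigma> a) = Polynomial.smult k a"
    using cross_multiples_imp_proportional[OF _ _ _ \<open>u\<^sub>1 \<noteq> 0\<close> _ r] a \<open>u\<^sub>2 \<noteq> 0\<close>
    by (metis shift_poly.degree_map_poly_hom shift_coeffs.hom_0_iff shift_poly.hom_0_iff)
  then obtain l m where "l \<noteq> 0" "a = Polynomial.smult l (map_poly (\<lambda>x. [:x:]) m)"
    using shift_proportional_imp_const_coeffs shift_nonzero a by blast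
  then show ?thesis
    using a saturated by (metis smult_0_right map_poly_0)
qed

end

section \<open>Polynomials in a module endomorphism\<close>

locale module_endo = Modules.module scale
  for scale :: "'a::comm_ring_1 \<Rightarrow> 'v::ab_group_add \<Rightarrow> 'v" +
  fixes T :: "'v \<Rightarrow> 'v"
  assumes endo_add: "T (v + w) = T v + T w"
    and endo_scale: "T (scale a v) = scale a (T v)"
begin

sublocale T: additive T
  by unfold_locales (rule endo_add)

lemma endo_zero [simp]: "T 0 = 0"
  by (rule T.zero)

definition poly_endo :: "'a poly \<Rightarrow> 'v \<Rightarrow> 'v" where
  "poly_endo p v = (\<Sum>i\<le>degree p. scale (coeff p i) ((T ^^ i) v))"

lemma poly_endo_pCons [simp]: "poly_endo (pCons a p) v = scale a v + T (poly_endo p v)"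
proof -
  have "poly_endo (pCons a p) v = (\<Sum>i\<le>Suc (degree p). scale (coeff (pCons a p) i) ((T ^^ i) v))"
    unfolding poly_endo_def
    by (rule sum.mono_neutral_left) (auto simp: coeff_eq_0 degree_pCons_le not_le le_Suc_eq)
  also have "\<dots> = scale a v + (\<Sum>i\<le>degree p. scale (coeff p i) ((T ^^ Suc i) v))"
    by (subst sum.atMost_Suc_shift) simp
  also have "(\<Sum>i\<le>degree p. scale (coeff p i) ((T ^^ Suc i) v)) = T (poly_endo p v)"
    by (simp add: poly_endo_def T.sum endo_scale)
  finally show ?thesis .
qed

lemma poly_endo_0 [simp]: "poly_endo 0 v = 0"
  by (simp add: poly_endo_def)

lemma poly_endo_right_distrib: "poly_endo p (v + w) = poly_endo p v + poly_endo p w"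
  by (induction p) (simp_all add: scale_right_distrib T.add algebra_simps)

lemma poly_endo_left_distrib: "poly_endo (p + q) v = poly_endo p v + poly_endo q v"
  by (induction p q rule: poly_induct2) (simp_all add: scale_left_distrib T.add algebra_simps)

lemma poly_endo_scale: "poly_endo p (scale a v) = scale a (poly_endo p v)"
  by (induction p) (simp_all add: scale_right_distrib endo_scale mult.commute)

lemma poly_endo_smult: "poly_endo (Polynomial.smult a p) v = scale a (poly_endo p v)"
  by (induction p) (simp_all add: scale_right_distrib endo_scale)

lemma poly_endo_mult: "poly_endo p (poly_endo q v) = poly_endo (p * q) v"
  by (induction p) (simp_all add: poly_endo_left_distrib poly_endo_smult)

sublocale poly: Modules.module poly_endo
  by unfold_locales (simp_all add: poly_endo_right_distrib poly_endo_left_distrib poly_endo_mult one_pCons)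

lemma poly_endo_pcompose_intertwine:
  fixes scale' :: "'a \<Rightarrow> 'w::ab_group_add \<Rightarrow> 'w"
  assumes "module_endo scale' T'"
    and S_add: "\<And>v w. S (v + w) = S v + S w"
    and S_scale: "\<And>a v. S (scale' a v) = scale a (S v)"
    and S_T': "\<And>v. S (T' v) = poly_endo r (S v)"
  shows "S (module_endo.poly_endo scale' T' p v) = poly_endo (pcompose p r) (S v)"
proof (induction p)
  case 0
  have "S 0 = 0" using S_add[of 0 0] by simp
  then show ?case by (simp add: module_endo.poly_endo_0[OF assms(1)])
next
  case (pCons a p)
  then show ?case
    by (simp add: module_endo.poly_endo_pCons[OF assms(1)] S_add S_scale S_T'
        pcompose_pCons poly_endo_left_distrib poly_endo_mult)
qed

lemma poly_endo_commute:
  assumes "\<And>v w. S (v + w) = S v + S w" "\<And>a v. S (scale a v) = scale a (S v)"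
    and "\<And>v. S (T v) = T (S v)"
  shows "S (poly_endo p v) = poly_endo p (S v)"
  using poly_endo_pcompose_intertwine[OF module_endo_axioms assms(1,2), of "[:0, 1:]"] assms(3)
  by simp

lemma poly_endo_map_poly_intertwine:
  assumes S_add: "\<And>v w. S (v + w) = S v + S w"
    and S_scale: "\<And>a v. S (scale a v) = scale (\<phi> a) (S v)"
    and S_T: "\<And>v. S (T v) = T (S v)" and "\<phi> 0 = 0"
  shows "S (poly_endo p v) = poly_endo (map_poly \<phi> p) (S v)"
proof -
  have "S 0 = 0" using S_add[of 0 0] by simp
  then show ?thesis
    by (induction p) (simp_all add: S_add S_scale S_T map_poly_pCons \<open>\<phi> 0 = 0\<close>)
qed

lemma poly_endo_char_poly_eq_0_on_generators:
  assumes M: "M \<in> carrier_mat n n"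
    and T_B: "\<And>j. j < n \<Longrightarrow> T (B j) = (\<Sum>i<n. scale (M $$ (j, i)) (B i))"
    and "l < n"
  shows "poly_endo (char_poly M) (B l) = 0"
proof -
  define N where "N = char_poly_matrix M"
  have N: "N \<in> carrier_mat n n" using M by (simp add: N_def char_poly_matrix_def)
  have rows: "(\<Sum>i<n. poly_endo (N $$ (j, i)) (B i)) = 0" if "j < n" for j
  proof -
    have "(\<Sum>i<n. poly_endo (N $$ (j, i)) (B i))
        = (\<Sum>i<n. (if j = i then T (B i) else 0) - scale (M $$ (j, i)) (B i))"
      using M that by (intro sum.cong) (auto simp: N_def char_poly_matrix_def poly_endo_left_distrib)
    also have "\<dots> = 0"
      using that by (simp add: sum_subtractf T_B)
    finally show ?thesis .
  qed
  obtain A where A: "A \<in> carrier_mat n n" "A * N = det N \<cdot>\<^sub>m 1\<^sub>m n"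
    using adj_mat[OF N] by blast
  have "poly_endo (char_poly M) (B l) = (\<Sum>i<n. if l = i then poly_endo (det N) (B i) else 0)"
    using \<open>l < n\<close> by (simp add: N_def char_poly_def)
  also have "\<dots> = (\<Sum>i<n. poly_endo ((A * N) $$ (l, i)) (B i))"
    using \<open>l < n\<close> by (intro sum.cong) (simp_all add: A(2))
  also have "\<dots> = (\<Sum>i<n. \<Sum>k<n. poly_endo (A $$ (l, k)) (poly_endo (N $$ (k, i)) (B i)))"
    using \<open>l < n\<close> A(1) N
    by (intro sum.cong) (auto simp: scalar_prod_def atLeast0LessThan poly.scale_sum_left)
  also have "\<dots> = (\<Sum>k<n. poly_endo (A $$ (l, k)) (\<Sum>i<n. poly_endo (N $$ (k, i)) (B i)))"
    by (subst sum.swap) (simp add: poly.scale_sum_right)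
  also have "\<dots> = 0"
    by (simp add: rows)
  finally show ?thesis .
qed

lemma poly_endo_char_poly_eq_0:
  assumes torsion_free: "\<And>r v. r \<noteq> 0 \<Longrightarrow> scale r v = 0 \<Longrightarrow> v = 0"
    and span: "\<And>v. \<exists>t c. t \<noteq> 0 \<and> scale t v = (\<Sum>i<n. scale (c i) (B i))"
    and M: "M \<in> carrier_mat n n"
    and T_B: "\<And>j. j < n \<Longrightarrow> T (B j) = (\<Sum>i<n. scale (M $$ (j, i)) (B i))"
  shows "poly_endo (char_poly M) v = 0"
proof -
  obtain r c where "r \<noteq> 0" and r: "scale r v = (\<Sum>i<n. scale (c i) (B i))"
    using span by blast
  have "scale r (poly_endo (char_poly M) v) = poly_endo (char_poly M) (scale r v)"
    by (simp add: poly_endo_scale)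
  also have "\<dots> = 0"
    by (simp add: r poly.scale_sum_right poly_endo_scale poly_endo_char_poly_eq_0_on_generators[OF M T_B])
  finally show ?thesis
    using torsion_free \<open>r \<noteq> 0\<close> by blast
qed

lemma module_endo_scaled: "module_endo scale (\<lambda>v. scale t (T v))"
  by unfold_locales (simp_all add: endo_add endo_scale scale_right_distrib mult.commute)

lemma module_endo_poly_endo:
  assumes "module_endo scale S" and "\<And>v. S (T v) = T (S v)"
  shows "module_endo poly_endo S"
proof -
  interpret S: module_endo scale S by fact
  show ?thesis
    by unfold_locales (simp_all add: S.endo_add poly_endo_commute S.endo_scale assms(2))
qed

end

text \<open>
  Clearing denominators, \<open>s T\<close> maps the generators into their span for some \<open>s \<noteq> 0\<close>, so the
  determinant trick applies to \<open>s T\<close>; the annihilating polynomial is \<open>\<chi>(s x)\<close>.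
\<close>
lemma finite_rank_endo_annihilated:
  fixes scale :: "'a::idom \<Rightarrow> 'v::ab_group_add \<Rightarrow> 'v" and n :: nat
  assumes "module_endo scale T"
    and torsion_free: "\<And>r v. r \<noteq> 0 \<Longrightarrow> scale r v = 0 \<Longrightarrow> v = 0"
    and span: "\<And>v. \<exists>t c. t \<noteq> 0 \<and> scale t v = (\<Sum>i<n. scale (c i) (B i))"
  shows "\<exists>P. P \<noteq> 0 \<and> (\<forall>v. module_endo.poly_endo scale T P v = 0)"
proof -
  interpret module_endo scale T by fact
  have "\<forall>j. \<exists>t c. t \<noteq> 0 \<and> scale t (T (B j)) = (\<Sum>i<n. scale (c i) (B i))"
    using span by blast
  then obtain t c where t: "\<And>j. t j \<noteq> 0"
    and c: "\<And>j. scale (t j) (T (B j)) = (\<Sum>i<n. scale (c j i) (B i))"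
    by metis
  define s where "s = (\<Prod>j<n. t j)"
  have "s \<noteq> 0" using t by (simp add: s_def)
  define D where "D v = scale s (T v)" for v
  interpret D: module_endo scale D
    unfolding D_def by (rule module_endo_scaled)
  define M where "M = mat n n (\<lambda>(j, i). (\<Prod>k\<in>{..<n} - {j}. t k) * c j i)"
  have M: "M \<in> carrier_mat n n" by (simp add: M_def)
  have D_B: "D (B j) = (\<Sum>i<n. scale (M $$ (j, i)) (B i))" if "j < n" for j
  proof -
    have "s = (\<Prod>k\<in>{..<n} - {j}. t k) * t j"
      using that prod.remove[of "{..<n}" j t] by (simp add: s_def mult.commute)
    then have "D (B j) = scale (\<Prod>k\<in>{..<n} - {j}. t k) (scale (t j) (T (B j)))"
      by (simp add: D_def)
    also have "\<dots> = (\<Sum>i<n. scale (M $$ (j, i)) (B i))"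
      using that by (simp add: c scale_sum_right M_def)
    finally show ?thesis .
  qed
  have kills: "D.poly_endo (char_poly M) v = 0" for v
    using D.poly_endo_char_poly_eq_0[OF torsion_free span M D_B] .
  define P where "P = pcompose (char_poly M) [:0, s:]"
  have P_eq: "poly_endo P v = D.poly_endo (char_poly M) v" for v
    using poly_endo_pcompose_intertwine[OF D.module_endo_axioms, of id "[:0, s:]"]
    by (simp add: P_def D_def endo_add endo_scale)
  have "lead_coeff P = lead_coeff (char_poly M) * lead_coeff [:0, s:] ^ degree (char_poly M)"
    unfolding P_def using \<open>s \<noteq> 0\<close> by (intro lead_coeff_comp) simp
  then have "P \<noteq> 0"
    using degree_monic_char_poly[OF M] \<open>s \<noteq> 0\<close> by auto
  with P_eq kills show ?thesis
    by auto
qed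

lemma poly_op_eq_poly_endo:
  "module_endo scale T \<Longrightarrow> poly_op scale P T v = module_endo.poly_endo scale T P v"
  by (simp add: poly_op_def module_endo.poly_endo_def)

section \<open>The Casimir operator of an \<open>sl(2)\<close>-module\<close>

locale sl2_rep =
  fixes scale :: "complex \<Rightarrow> 'v::ab_group_add \<Rightarrow> 'v" and e f h :: "'v \<Rightarrow> 'v"
  assumes sl2: "sl2_module scale e f h"
begin

sublocale vector_space scale
  using sl2 by (simp add: sl2_module_def)

sublocale e: Vector_Spaces.linear scale scale e
  using sl2 by (simp add: sl2_module_def)

sublocale f: Vector_Spaces.linear scale scale f
  using sl2 by (simp add: sl2_module_def)

sublocale h: Vector_Spaces.linear scale scale h
  using sl2 by (simp add: sl2_module_def)

abbreviation L :: "'v \<Rightarrow> 'v" where "L \<equiv> L0 scale h"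
abbreviation Cas :: "'v \<Rightarrow> 'v" where "Cas \<equiv> casimir scale e f h"

lemma module_endo_L: "module_endo scale L"
  by unfold_locales (simp_all add: L0_def h.add h.scale scale_right_distrib)

lemma poly_endo_L0: "module_endo.poly_endo scale L = zact scale h"
  by (simp add: fun_eq_iff zact_def poly_op_eq_poly_endo[OF module_endo_L])

sublocale L: module_endo scale L
  rewrites "module_endo.poly_endo scale L = zact scale h"
  by (rule module_endo_L) (rule poly_endo_L0)

lemma h_eq: "h v = - (L v + L v)"
proof -
  have "L v + L v = scale (-1/2 + -1/2) (h v)"
    by (simp only: L0_def scale_left_distrib)
  then show ?thesis by simp
qed

lemma e_L: "e (L v) = L (e v) + e v"
proof -
  have "h (e v) = e (h v) + scale 2 (e v)"
    using sl2 by (simp add: sl2_module_def diff_eq_eq)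
  then show ?thesis
    by (simp add: L0_def e.scale e.neg h.add scale_right_distrib)
qed

lemma f_L: "f (L v) = L (f v) - f v"
proof -
  have "h (f v) = f (h v) - scale 2 (f v)"
    using sl2 by (simp add: sl2_module_def diff_eq_eq)
  then show ?thesis
    by (simp add: L0_def f.scale f.neg scale_right_diff_distrib)
qed

lemma e_f: "e (f v) = f (e v) - (L v + L v)"
  using sl2 h_eq[of v] by (simp add: sl2_module_def diff_eq_eq)

lemma casimir_eq: "Cas v = L (L v) - L v + f (e v)"
  by (simp add: casimir_def Lm1_def L1_def f.neg)

sublocale C: module_endo scale Cas
  by unfold_locales (simp_all add: casimir_eq L.endo_add L.endo_scale e.add f.add e.scale f.scale
      algebra_simps scale_right_diff_distrib)

lemma casimir_L: "Cas (L v) = L (Cas v)"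
  by (simp add: casimir_eq L.endo_add L.T.diff e_L f_L f.diff f.add algebra_simps)

lemma casimir_e: "e (Cas v) = Cas (e v)"
  by (simp add: casimir_eq L.endo_add L.T.diff e_L f_L e_f e.diff f.diff e.add f.add algebra_simps)

lemma casimir_f: "f (Cas v) = Cas (f v)"
  by (simp add: casimir_eq L.endo_add L.T.diff e_L f_L e_f e.diff f.diff e.add f.add algebra_simps)

text \<open>\<open>ZC.poly_endo a\<close> evaluates \<open>a \<in> \<complex>[z][x]\<close> at \<open>z = L0\<close>, \<open>x = C\<close>.\<close>
sublocale ZC: module_endo "zact scale h" Cas
  using L.module_endo_poly_endo[OF C.module_endo_axioms casimir_L] .

lemma f_zact: "f (zact scale h p v) = zact scale h (shift_poly (-1) p) (f v)"
  using L.poly_endo_pcompose_intertwine[OF L.module_endo_axioms f.add f.scale, of "[:-1, 1:]"]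
  by (simp add: shift_poly_def f_L poly_endo_L0)

lemma e_zact: "e (zact scale h p v) = zact scale h (shift_poly 1 p) (e v)"
  using L.poly_endo_pcompose_intertwine[OF L.module_endo_axioms e.add e.scale, of "[:1, 1:]"]
  by (simp add: shift_poly_def e_L add.commute poly_endo_L0)

lemma f_casimir_poly: "f (ZC.poly_endo a v) = ZC.poly_endo (map_poly (shift_poly (-1)) a) (f v)"
  by (rule ZC.poly_endo_map_poly_intertwine) (simp_all add: f.add f_zact casimir_f)

lemma e_casimir_poly: "e (ZC.poly_endo a v) = ZC.poly_endo (map_poly (shift_poly 1) a) (e v)"
  by (rule ZC.poly_endo_map_poly_intertwine) (simp_all add: e.add e_zact casimir_e)

lemma casimir_poly_fe: "ZC.poly_endo [:-[:0, -1, 1:], 1:] v = f (e v)"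
  by (simp add: casimir_eq L.T.diff L.T.minus algebra_simps)

lemma casimir_poly_ef: "ZC.poly_endo [:-[:0, 1, 1:], 1:] v = e (f v)"
  by (simp add: casimir_eq e_f L.T.diff L.T.minus algebra_simps)

lemma casimir_poly_const_coeffs:
  "ZC.poly_endo (map_poly (\<lambda>x. [:x:]) P) v = poly_op scale P Cas v"
  by (induction P) (simp_all add: map_poly_pCons poly_op_eq_poly_endo[OF C.module_endo_axioms])

definition casimir_annihilator :: "complex poly poly set" where
  "casimir_annihilator = {a. \<forall>v. ZC.poly_endo a v = 0}"

lemma kills_casimir_smult:
  "kills_casimir scale e f h P \<Longrightarrow> kills_casimir scale e f h (Polynomial.smult c P)"
  by (simp add: kills_casimir_def poly_op_eq_poly_endo[OF C.module_endo_axioms] C.poly_endo_smult)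

lemma casimir_rat_eq: "casimir_rat scale e f h (w, q) = (zact scale h (q * q) (Cas w), q * q * q)"
proof -
  have "pcompose (pcompose q [:1, 1:]) [:-1, 1:] = q"
    using shift_poly_shift_poly[of "-1" 1 q] by (simp add: shift_poly_def)
  then show ?thesis
    by (simp add: casimir_rat_def frac_add_def rat_L0_def frac_cscale_def rat_Lm1_def rat_L1_def
        Lm1_def L1_def casimir_eq L.poly.scale_right_distrib L.poly.scale_right_diff_distrib f.neg)
qed

text \<open>\<open>power_frac p u x\<close>: \<open>x\<close> represents \<open>u / p\<close>, with a power of \<open>p\<close> as denominator.\<close>
definition power_frac where
  "power_frac p u x \<longleftrightarrow> (\<exists>k. x = (zact scale h (p ^ k) u, p ^ Suc k))"

lemma power_frac_self: "power_frac p v (v, p)"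
  unfolding power_frac_def by (rule exI[of _ 0]) simp

lemma power_frac_casimir_rat:
  assumes "power_frac p u x"
  shows "power_frac p (Cas u) (casimir_rat scale e f h x)"
proof -
  obtain k where x: "x = (zact scale h (p ^ k) u, p ^ Suc k)"
    using assms by (auto simp: power_frac_def)
  define m where "m = Suc k + Suc k + k"
  have "p ^ Suc k * p ^ Suc k * p ^ k = p ^ m" "p ^ Suc k * p ^ Suc k * p ^ Suc k = p ^ Suc m"
    unfolding m_def power_add[symmetric] by simp_all
  then show ?thesis
    unfolding power_frac_def
    by (intro exI[of _ m]) (simp del: power_Suc add: x casimir_rat_eq ZC.endo_scale)
qed

lemma power_frac_cscale: "power_frac p u x \<Longrightarrow> power_frac p (scale c u) (frac_cscale scale c x)"
  unfolding power_frac_def frac_cscale_def by (auto simp: L.poly_endo_scale)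

lemma power_frac_add:
  assumes "power_frac p u x" "power_frac p w y"
  shows "power_frac p (u + w) (frac_add scale h x y)"
proof -
  obtain k j where x: "x = (zact scale h (p ^ k) u, p ^ Suc k)" and y: "y = (zact scale h (p ^ j) w, p ^ Suc j)"
    using assms by (auto simp: power_frac_def)
  define m where "m = Suc j + k"
  have "p ^ Suc j * p ^ k = p ^ m" "p ^ Suc k * p ^ j = p ^ m" "p ^ Suc k * p ^ Suc j = p ^ Suc m"
    unfolding m_def power_add[symmetric] by (simp_all add: add.commute)
  then show ?thesis
    unfolding power_frac_def
    by (intro exI[of _ m])
      (simp del: power_Suc add: x y frac_add_def L.poly.scale_right_distrib)
qed

lemma power_frac_sum:
  assumes "ns \<noteq> []" "\<And>n. n \<in> set ns \<Longrightarrow> power_frac p (u n) (g n)"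
  shows "power_frac p (\<Sum>n\<leftarrow>ns. u n) (frac_sum scale h (map g ns))"
  using assms
proof (induction ns)
  case Nil
  then show ?case by simp
next
  case (Cons n ns)
  show ?case
  proof (cases "ns = []")
    case True
    then show ?thesis
      using Cons.prems by (simp add: frac_sum_def frac_add_def frac_zero_def)
  next
    case False
    then show ?thesis
      using Cons by (simp add: frac_sum_def power_frac_add)
  qed
qed

lemma power_frac_poly_op:
  "power_frac p (poly_op scale P Cas v) (frac_poly_op scale h P (casimir_rat scale e f h) (v, p))"
proof -
  have Cas_iter: "power_frac p ((Cas ^^ i) v) ((casimir_rat scale e f h ^^ i) (v, p))" for i
    by (induction i) (simp_all add: power_frac_self power_frac_casimir_rat)
  have "poly_op scale P Cas v = (\<Sum>i\<leftarrow>[0..<Suc (degree P)]. scale (coeff P i) ((Cas ^^ i) v))"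
    by (simp add: poly_op_def sum_set_upt_conv_sum_list_nat[symmetric] atLeast0LessThan
        flip: lessThan_Suc_atMost)
  then show ?thesis
    unfolding frac_poly_op_def
    by (simp only:) (rule power_frac_sum, simp_all add: power_frac_cscale Cas_iter)
qed


lemma frac_sum_rscale:
  assumes "length cs = length bs" "list_all (\<lambda>c. snd c \<noteq> 0) cs" "list_all frac_ok bs"
  defines "x \<equiv> frac_sum scale h (map2 (frac_rscale scale h) cs bs)"
  shows "snd x \<noteq> 0 \<and> (\<exists>r. fst x = (\<Sum>i<length bs. zact scale h (r i) (fst (bs ! i))))"
  using assms(1-3) unfolding x_def
proof (induction cs bs rule: list_induct2)
  case Nil
  then show ?case by (simp add: frac_sum_def frac_zero_def)
next
  case (Cons c cs b bs)
  define y where "y = frac_sum scale h (map2 (frac_rscale scale h) cs bs)"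
  obtain r where y0: "snd y \<noteq> 0" and r: "fst y = (\<Sum>i<length bs. zact scale h (r i) (fst (bs ! i)))"
    using Cons by (auto simp: y_def)
  have "snd b \<noteq> 0" "snd c \<noteq> 0"
    using Cons.prems by (auto simp: frac_ok_def)
  define r' where "r' i = (case i of 0 \<Rightarrow> snd y * fst c | Suc j \<Rightarrow> snd c * snd b * r j)" for i
  have "fst (frac_add scale h (frac_rscale scale h c b) y)
      = zact scale h (r' 0) (fst ((b # bs) ! 0))
        + (\<Sum>i<length bs. zact scale h (r' (Suc i)) (fst ((b # bs) ! Suc i)))"
    by (simp add: frac_add_def frac_rscale_def r r'_def L.poly.scale_sum_right)
  also have "\<dots> = (\<Sum>i<length (b # bs). zact scale h (r' i) (fst ((b # bs) ! i)))"
    by (simp only: length_Cons sum.lessThan_Suc_shift)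
  finally have "fst (frac_add scale h (frac_rscale scale h c b) y)
      = (\<Sum>i<length (b # bs). zact scale h (r' i) (fst ((b # bs) ! i)))" .
  moreover have "frac_sum scale h (map2 (frac_rscale scale h) (c # cs) (b # bs))
      = frac_add scale h (frac_rscale scale h c b) y"
    by (simp add: frac_sum_def y_def)
  ultimately show ?case
    using y0 \<open>snd b \<noteq> 0\<close> \<open>snd c \<noteq> 0\<close> by (auto simp: frac_add_def frac_rscale_def)
qed

end

section \<open>Torsion-free modules of finite rank\<close>

locale torsion_free_sl2_rep = sl2_rep +
  assumes torsion_free: "torsion_free scale h"
begin

lemma torsion_freeD: "p \<noteq> 0 \<Longrightarrow> zact scale h p v = 0 \<Longrightarrow> v = 0"
  using torsion_free by (auto simp: torsion_free_def)

lemma casimir_annihilator_shift_mult: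
  assumes "a \<in> casimir_annihilator"
  shows "map_poly (shift_poly 1) a * [:-[:0, 1, 1:], 1:] \<in> casimir_annihilator"
proof -
  have "ZC.poly_endo (map_poly (shift_poly 1) a * [:-[:0, 1, 1:], 1:]) v = e (ZC.poly_endo a (f v))" for v
    by (simp only: ZC.poly_endo_mult[symmetric] casimir_poly_ef e_casimir_poly)
  with assms show ?thesis
    by (simp add: casimir_annihilator_def)
qed

lemma casimir_annihilator_unshift_mult:
  assumes "a \<in> casimir_annihilator"
  shows "map_poly (shift_poly (-1)) (a * [:-[:0, 1, 1:], 1:]) \<in> casimir_annihilator"
proof -
  have unshift_factor: "map_poly (shift_poly (-1)) [:-[:0, 1, 1:], 1:] = [:-[:0, -1, 1:], 1:]"
    by (simp add: shift_poly_def)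
  have "ZC.poly_endo (map_poly (shift_poly (-1)) (a * [:-[:0, 1, 1:], 1:])) v
      = f (ZC.poly_endo a (e v))" for v
    by (simp only: shift_coeffs.hom_mult unshift_factor ZC.poly_endo_mult[symmetric] casimir_poly_fe
        f_casimir_poly)
  with assms show ?thesis
    by (simp add: casimir_annihilator_def)
qed

sublocale annihilator: shift_stable_ideal casimir_annihilator 1 "[:0, 1, 1:]"
proof
  show "(1::complex) \<noteq> 0" by simp
next
  fix a b assume "a \<in> casimir_annihilator" "b \<in> casimir_annihilator"
  then show "a - b \<in> casimir_annihilator"
    by (simp add: casimir_annihilator_def ZC.poly.scale_left_diff_distrib)
next
  fix a b assume "a \<in> casimir_annihilator"
  then show "b * a \<in> casimir_annihilator"
    by (simp add: casimir_annihilator_def ZC.poly_endo_mult[symmetric])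
next
  fix s a assume "Polynomial.smult s a \<in> casimir_annihilator" "s \<noteq> 0"
  then show "a \<in> casimir_annihilator"
    by (auto simp: casimir_annihilator_def ZC.poly_endo_smult intro: torsion_freeD)
qed (fact casimir_annihilator_shift_mult casimir_annihilator_unshift_mult)+

lemma finite_rank_span:
  assumes "finite_rank scale h"
  obtains B and n :: nat
  where "\<And>v. \<exists>t r. t \<noteq> 0 \<and> zact scale h t v = (\<Sum>i<n. zact scale h (r i) (B i))"
proof -
  obtain bs where bs: "list_all frac_ok bs"
    and span: "\<And>x. frac_ok x \<Longrightarrow> \<exists>cs. length cs = length bs \<and> list_all (\<lambda>c. snd c \<noteq> 0) cs \<and>
               frac_eq scale h x (frac_sum scale h (map2 (frac_rscale scale h) cs bs))"
    using assms unfolding finite_rank_def by blast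
  have "\<exists>t r. t \<noteq> 0 \<and> zact scale h t v = (\<Sum>i<length bs. zact scale h (r i) (fst (bs ! i)))" for v
  proof -
    obtain cs where cs: "length cs = length bs" "list_all (\<lambda>c. snd c \<noteq> 0) cs"
      and eq: "frac_eq scale h (v, 1) (frac_sum scale h (map2 (frac_rscale scale h) cs bs))"
      using span[of "(v, 1)"] by (auto simp: frac_ok_def)
    define y where "y = frac_sum scale h (map2 (frac_rscale scale h) cs bs)"
    obtain r where "snd y \<noteq> 0" and r: "fst y = (\<Sum>i<length bs. zact scale h (r i) (fst (bs ! i)))"
      using frac_sum_rscale[OF cs bs] by (auto simp: y_def)
    obtain s where "s \<noteq> 0" "zact scale h s (zact scale h (snd y) v - fst y) = 0"
      using eq by (auto simp: frac_eq_def y_def)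
    then have "zact scale h (snd y) v = fst y"
      by (metis torsion_freeD eq_iff_diff_eq_0)
    then show ?thesis
      using r \<open>snd y \<noteq> 0\<close> by auto
  qed
  then show ?thesis
    using that[of "\<lambda>i. fst (bs ! i)" "length bs"] by blast
qed

lemma casimir_annihilator_nonzero:
  assumes "finite_rank scale h"
  shows "\<exists>a. a \<noteq> 0 \<and> a \<in> casimir_annihilator"
proof -
  obtain B and n :: nat
    where span: "\<And>v. \<exists>t r. t \<noteq> 0 \<and> zact scale h t v = (\<Sum>i<n. zact scale h (r i) (B i))"
    using finite_rank_span[OF assms] by blast
  have "\<exists>a. a \<noteq> 0 \<and> (\<forall>v. ZC.poly_endo a v = 0)"
    by (rule finite_rank_endo_annihilated[OF ZC.module_endo_axioms, where n = n and B = B])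
      (use torsion_freeD span in blast)+
  then show ?thesis
    by (simp add: casimir_annihilator_def)
qed

lemma kills_casimir_iff_annihilator:
  "kills_casimir scale e f h P \<longleftrightarrow> map_poly (\<lambda>x. [:x:]) P \<in> casimir_annihilator"
  by (simp add: kills_casimir_def casimir_annihilator_def casimir_poly_const_coeffs)

lemma kills_casimir_nonzero:
  assumes "finite_rank scale h"
  shows "\<exists>P. P \<noteq> 0 \<and> kills_casimir scale e f h P"
  using annihilator.const_coeff_poly_mem casimir_annihilator_nonzero[OF assms] kills_casimir_iff_annihilator
  by blast

lemma frac_eq_zero_iff: "frac_eq scale h x frac_zero \<longleftrightarrow> fst x = 0"
proof
  assume "frac_eq scale h x frac_zero"
  then obtain s where "s \<noteq> 0" "zact scale h s (fst x) = 0"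
    by (auto simp: frac_eq_def frac_zero_def)
  then show "fst x = 0" by (rule torsion_freeD)
qed (auto simp: frac_eq_def frac_zero_def intro!: exI[of _ 1])

lemma kills_casimir_rat_iff: "kills_casimir_rat scale e f h P \<longleftrightarrow> kills_casimir scale e f h P"
proof -
  have "fst (frac_poly_op scale h P (casimir_rat scale e f h) (v, p)) = 0 \<longleftrightarrow> poly_op scale P Cas v = 0"
    if "p \<noteq> 0" for v p
  proof -
    obtain k where "frac_poly_op scale h P (casimir_rat scale e f h) (v, p)
        = (zact scale h (p ^ k) (poly_op scale P Cas v), p ^ Suc k)"
      using power_frac_poly_op[of p P v] by (auto simp: power_frac_def)
    then show ?thesis
      using torsion_freeD[of "p ^ k"] that by auto
  qed
  then show ?thesis
    unfolding kills_casimir_rat_def kills_casimir_def frac_eq_zero_iff frac_ok_def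
    by (metis prod.collapse one_neq_zero snd_conv)
qed

end

lemma is_minpoly_exists:
  assumes smult_closed: "\<And>c P. K P \<Longrightarrow> K (Polynomial.smult c P)"
    and "Q \<noteq> 0" "K Q"
  shows "\<exists>P. is_minpoly K P"
proof -
  obtain R where R: "K R \<and> R \<noteq> 0" and min: "\<And>S. K S \<and> S \<noteq> 0 \<Longrightarrow> degree R \<le> degree S"
    using ex_has_least_nat[of "\<lambda>R. K R \<and> R \<noteq> 0" Q degree] assms(2,3) by blast
  define P where "P = Polynomial.smult (inverse (lead_coeff R)) R"
  have "lead_coeff R \<noteq> 0" using R by simp
  then have "P \<noteq> 0" "lead_coeff P = 1" "degree P = degree R"
    using R by (simp_all add: P_def)
  moreover have "K P" using smult_closed R by (simp add: P_def)
  ultimately show ?thesis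
    using min by (auto simp: is_minpoly_def)
qed

theorem theorem7p1:
  fixes scale :: "complex \<Rightarrow> 'v::ab_group_add \<Rightarrow> 'v"
    and e f h :: "'v \<Rightarrow> 'v"
  assumes "sl2_module scale e f h"
    and "torsion_free scale h"
    and "finite_rank scale h"
  shows "(\<exists>P. is_minpoly (kills_casimir scale e f h) P) \<and>
         (\<forall>P. is_minpoly (kills_casimir scale e f h) P \<longleftrightarrow>
              is_minpoly (kills_casimir_rat scale e f h) P)"
proof -
  interpret torsion_free_sl2_rep scale e f h
    using assms(1,2) by unfold_locales
  obtain Q where "Q \<noteq> 0" "kills_casimir scale e f h Q"
    using kills_casimir_nonzero[OF assms(3)] by blast
  then have "\<exists>P. is_minpoly (kills_casimir scale e f h) P"
    using is_minpoly_exists[of "kills_casimir scale e f h"] kills_casimir_smult by blast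
  moreover have "kills_casimir_rat scale e f h = kills_casimir scale e f h"
    using kills_casimir_rat_iff by blast
  ultimately show ?thesis by simp
qed

end
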